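(* For every standard allocation rule $f$, every instance and every seller $i\in S$, we have $r^\star\ge r_i$, where $r^\star$ is the stopping rate of $\mathrm{EnvyFree}(f)$ on the cost vector $c$ and $r_i$ is the stopping rate of $\mathrm{EnvyFree}(f)$ on the cost vector obtained from $c$ by replacing $c_i$ with $0$.
   Context: Setting: a buyer with budget $B>0$ faces a finite set $S$ of sellers; seller $i$ owns one divisible item giving utility $u_i>0$ and has cost $c_i\ge0$. A standard allocation rule is a non-increasing $f:[0,\infty)\to[0,1]$ with $f(0)=1$, $f(e-1)=0$. For $r>0$: $f_r(x)=f(x/r)$, $Q_r(x)=xf_r(x)+\int_x^\infty f_r(y)\,dy$, $P_{i,r}(x)=u_iQ_r(x/u_i)$. The stopping rate of $\mathrm{EnvyFree}(f)$ on a cost vector $c'$ is the value at which, decreasing $r$ from $\infty$, the nondecreasing function $r\mapsto\sum_iP_{i,r}(c'_i)$ first equals $B$. *)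

theory Defs
  imports "HOL-Analysis.Analysis"
begin

definition standard_alloc :: "(real \<Rightarrow> real) \<Rightarrow> bool" where
  "standard_alloc f \<longleftrightarrow>
     (\<forall>x y. 0 \<le> x \<longrightarrow> x \<le> y \<longrightarrow> f y \<le> f x) \<and>
     (\<forall>x\<ge>0. 0 \<le> f x \<and> f x \<le> 1) \<and>
     f 0 = 1 \<and> f (exp 1 - 1) = 0"

definition f_r :: "(real \<Rightarrow> real) \<Rightarrow> real \<Rightarrow> real \<Rightarrow> real" where
  "f_r f r x = f (x / r)"

definition Q_r :: "(real \<Rightarrow> real) \<Rightarrow> real \<Rightarrow> real \<Rightarrow> real" where
  "Q_r f r x = x * f_r f r x + integral {x..} (\<lambda>y. f_r f r y)"

definition P_r :: "(real \<Rightarrow> real) \<Rightarrow> real \<Rightarrow> real \<Rightarrow> real \<Rightarrow> real" where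
  "P_r f ui r x = ui * Q_r f r (x / ui)"

definition total_pay :: "(real \<Rightarrow> real) \<Rightarrow> 'a set \<Rightarrow> ('a \<Rightarrow> real) \<Rightarrow> ('a \<Rightarrow> real) \<Rightarrow> real \<Rightarrow> real" where
  "total_pay f S u c' r = (\<Sum>i\<in>S. P_r f (u i) r (c' i))"

text \<open>Stopping rate: decreasing r from infinity, the first value at which the
  nondecreasing function r \<mapsto> total_pay reaches B, i.e. the supremum of the
  rates r > 0 whose total payment is at most B.\<close>
definition stopping_rate :: "(real \<Rightarrow> real) \<Rightarrow> real \<Rightarrow> 'a set \<Rightarrow> ('a \<Rightarrow> real) \<Rightarrow> ('a \<Rightarrow> real) \<Rightarrow> real" where
  "stopping_rate f B S u c' = Sup {r. 0 < r \<and> total_pay f S u c' r \<le> B}"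

end

theory Submission imports Defs begin

text \<open>Lowering one cost can only raise every seller's payment at a fixed rate, because
  \<open>Q_r\<close> is antitone. Hence every rate feasible for the modified cost vector is feasible
  for \<open>c\<close>, and the supremum can only grow. Since \<open>Sup\<close> of an unbounded set of reals
  is an unspecified value, this needs the feasible set for the modified costs to be
  nonempty (at small rates every payment is small) and the feasible set for \<open>c\<close> to be
  bounded above (one seller's payment grows linearly in the rate), which holds unless
  \<open>f\<close> vanishes on \<open>(0, \<infinity>)\<close>; in that degenerate case all payments are \<open>0\<close> and the two
  sets coincide.\<close>

context
  fixes f :: "real \<Rightarrow> real" and r :: real
  assumes f: "standard_alloc f" and r: "0 < r"
begin

lemma f_r_nonneg: "0 \<le> y \<Longrightarrow> 0 \<le> f_r f r y"
  using f r unfolding standard_alloc_def f_r_def by auto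

lemma f_r_le_one: "0 \<le> y \<Longrightarrow> f_r f r y \<le> 1"
  using f r unfolding standard_alloc_def f_r_def by auto

lemma f_r_antimono: "0 \<le> y \<Longrightarrow> y \<le> y' \<Longrightarrow> f_r f r y' \<le> f_r f r y"
proof -
  assume "0 \<le> y" "y \<le> y'"
  then have "0 \<le> y / r" "y / r \<le> y' / r" using r by (auto intro: divide_right_mono)
  then show ?thesis using f unfolding standard_alloc_def f_r_def by blast
qed

lemma f_r_eq_0: "r * (exp 1 - 1) \<le> y \<Longrightarrow> f_r f r y = 0"
proof -
  assume "r * (exp 1 - 1) \<le> y"
  then have "exp 1 - 1 \<le> y / r" using r by (simp add: field_simps)
  moreover have "0 \<le> exp (1::real) - 1" by simp
  ultimately show ?thesis
    using f unfolding standard_alloc_def f_r_def by (smt (verit))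
qed

lemma f_r_integrable: "0 \<le> a \<Longrightarrow> f_r f r integrable_on {a..b}"
proof -
  assume "0 \<le> a"
  then have "mono_on {a..b} (\<lambda>y. - f_r f r y)"
    unfolding mono_on_def using f_r_antimono by auto
  then show ?thesis
    using integrable_neg[OF integrable_on_mono_on] by fastforce
qed

lemma integral_f_r_atLeast_eq:
  assumes "0 \<le> x" "x \<le> b" "r * (exp 1 - 1) \<le> b"
  shows "integral {x..} (f_r f r) = integral {x..b} (f_r f r)"
proof -
  have "integral {x..} (f_r f r) = integral {x..} (\<lambda>y. if y \<in> {x..b} then f_r f r y else 0)"
    by (rule integral_cong) (use assms f_r_eq_0 in auto)
  also have "\<dots> = integral {x..b} (f_r f r)"
    using integral_restrict_Int[of "{x..}" "{x..b}" "f_r f r"] by (simp add: Int_absorb1)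
  finally show ?thesis .
qed

lemma integral_f_r_atLeast_split:
  assumes "0 \<le> x" "x \<le> x'"
  shows "integral {x..} (f_r f r) = integral {x..x'} (f_r f r) + integral {x'..} (f_r f r)"
proof -
  define b where "b = max x' (r * (exp 1 - 1))"
  have "integral {x..x'} (f_r f r) + integral {x'..b} (f_r f r) = integral {x..b} (f_r f r)"
    by (rule Henstock_Kurzweil_Integration.integral_combine)
       (use assms f_r_integrable in \<open>auto simp: b_def\<close>)
  moreover have "integral {x..} (f_r f r) = integral {x..b} (f_r f r)"
    "integral {x'..} (f_r f r) = integral {x'..b} (f_r f r)"
    using assms by (auto intro!: integral_f_r_atLeast_eq simp: b_def)
  ultimately show ?thesis by simp
qed

lemma integral_f_r_atLeast_nonneg: "0 \<le> x \<Longrightarrow> 0 \<le> integral {x..} (f_r f r)"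
proof -
  assume "0 \<le> x"
  define b where "b = max x (r * (exp 1 - 1))"
  have "0 \<le> integral {x..b} (f_r f r)"
    using \<open>0 \<le> x\<close> by (intro integral_nonneg f_r_integrable f_r_nonneg) auto
  then show ?thesis
    using integral_f_r_atLeast_eq[of x b] \<open>0 \<le> x\<close> by (simp add: b_def)
qed

lemma integral_f_r_lower:
  "0 \<le> a \<Longrightarrow> a \<le> b \<Longrightarrow> (b - a) * f_r f r b \<le> integral {a..b} (f_r f r)"
  using integral_le[of "\<lambda>_. f_r f r b" "{a..b}" "f_r f r"] f_r_integrable f_r_antimono by auto

lemma Q_r_nonneg: "0 \<le> x \<Longrightarrow> 0 \<le> Q_r f r x"
  unfolding Q_r_def using f_r_nonneg integral_f_r_atLeast_nonneg by simp

lemma Q_r_antimono: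
  assumes "0 \<le> x" "x \<le> x'"
  shows "Q_r f r x' \<le> Q_r f r x"
proof -
  have "(x' - x) * f_r f r x' \<le> integral {x..x'} (f_r f r)"
    using integral_f_r_lower assms by simp
  moreover have "x * f_r f r x' \<le> x * f_r f r x"
    using f_r_antimono assms by (simp add: mult_left_mono)
  ultimately show ?thesis
    unfolding Q_r_def using integral_f_r_atLeast_split[OF assms] by (simp add: algebra_simps)
qed

lemma Q_r_le: "0 \<le> x \<Longrightarrow> Q_r f r x \<le> r * (exp 1 - 1)"
proof -
  assume "0 \<le> x"
  have e: "0 \<le> r * (exp 1 - 1)" using r by simp
  have "Q_r f r x \<le> Q_r f r 0" using Q_r_antimono \<open>0 \<le> x\<close> by simp
  also have "\<dots> = integral {0..r * (exp 1 - 1)} (f_r f r)"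
    unfolding Q_r_def using integral_f_r_atLeast_eq[OF _ e] e by simp
  also have "\<dots> \<le> integral {0..r * (exp 1 - 1)} (\<lambda>_. 1)"
    by (rule integral_le) (use f_r_integrable f_r_le_one in auto)
  finally show ?thesis using e by simp
qed

text \<open>No hypothesis \<open>x \<le> r d\<close> is needed: otherwise the left-hand side is \<open>\<le> 0\<close>.\<close>
lemma Q_r_ge:
  assumes "0 < d" "0 \<le> x"
  shows "(r * d - x) * f d \<le> Q_r f r x"
proof (cases "x \<le> r * d")
  case True
  have "(r * d - x) * f_r f r (r * d) \<le> integral {x..r * d} (f_r f r)"
    using integral_f_r_lower assms True by simp
  moreover have "f_r f r (r * d) = f d" using r by (simp add: f_r_def)
  moreover have "0 \<le> x * f_r f r x" "0 \<le> integral {r * d..} (f_r f r)"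
    using assms r f_r_nonneg integral_f_r_atLeast_nonneg by auto
  ultimately show ?thesis
    unfolding Q_r_def using integral_f_r_atLeast_split[OF \<open>0 \<le> x\<close> True] by simp
next
  case False
  have "0 \<le> f d" using f_r_nonneg[of "r * d"] assms r by (simp add: f_r_def)
  then have "(r * d - x) * f d \<le> 0" using False by (simp add: mult_nonpos_nonneg)
  then show ?thesis using Q_r_nonneg[OF assms(2)] by linarith
qed

lemma Q_r_eq_0:
  assumes "\<forall>d>0. f d = 0" "0 \<le> x"
  shows "Q_r f r x = 0"
proof -
  have vanish: "f_r f r y = 0" if "y \<noteq> 0" "0 \<le> y" for y
    using assms that r by (simp add: f_r_def)
  have "integral {x..} (f_r f r) = integral {x..} (\<lambda>_. 0)"
    by (rule integral_spike[of "{0}"]) (use vanish assms in auto)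
  moreover have "x * f_r f r x = 0" using vanish assms(2) by (cases "x = 0") auto
  ultimately show ?thesis unfolding Q_r_def by simp
qed

end

lemma total_pay_antimono:
  assumes "standard_alloc f" "0 < r" "\<forall>j\<in>S. 0 < u j" "\<forall>j\<in>S. 0 \<le> c j \<and> c j \<le> c' j"
  shows "total_pay f S u c' r \<le> total_pay f S u c r"
  unfolding total_pay_def P_r_def
proof (rule sum_mono)
  fix j assume "j \<in> S"
  then have "0 \<le> c j / u j" "c j / u j \<le> c' j / u j"
    using assms by (auto intro: divide_right_mono less_imp_le)
  then have "Q_r f r (c' j / u j) \<le> Q_r f r (c j / u j)"
    by (rule Q_r_antimono[OF assms(1,2)])
  then show "u j * Q_r f r (c' j / u j) \<le> u j * Q_r f r (c j / u j)"
    using assms \<open>j \<in> S\<close> by (simp add: mult_left_mono)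
qed

lemma total_pay_le:
  assumes "standard_alloc f" "0 < r" "\<forall>j\<in>S. 0 < u j" "\<forall>j\<in>S. 0 \<le> c j"
  shows "total_pay f S u c r \<le> r * (exp 1 - 1) * (\<Sum>j\<in>S. u j)"
  unfolding total_pay_def P_r_def sum_distrib_left
proof (rule sum_mono)
  fix j assume "j \<in> S"
  then have "Q_r f r (c j / u j) \<le> r * (exp 1 - 1)"
    using assms by (intro Q_r_le) auto
  then show "u j * Q_r f r (c j / u j) \<le> r * (exp 1 - 1) * u j"
    using assms \<open>j \<in> S\<close> by (simp add: mult_left_mono mult.commute)
qed

lemma total_pay_ge:
  assumes "standard_alloc f" "0 < r" "finite S" "\<forall>j\<in>S. 0 < u j" "\<forall>j\<in>S. 0 \<le> c j"
    and "i \<in> S" "0 < d"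
  shows "(u i * r * d - c i) * f d \<le> total_pay f S u c r"
proof -
  have "0 < u i" "0 \<le> c i / u i" using assms by (simp_all add: less_imp_le)
  then have "(u i * r * d - c i) * f d = u i * ((r * d - c i / u i) * f d)"
    by (simp add: field_simps)
  also have "\<dots> \<le> u i * Q_r f r (c i / u i)"
    using \<open>0 < u i\<close> Q_r_ge[OF assms(1,2,7) \<open>0 \<le> c i / u i\<close>] by (simp add: mult_left_mono)
  also have "\<dots> \<le> total_pay f S u c r"
    unfolding total_pay_def P_r_def
    using assms Q_r_nonneg by (intro member_le_sum) auto
  finally show ?thesis .
qed

lemma total_pay_eq_0:
  assumes "standard_alloc f" "0 < r" "\<forall>j\<in>S. 0 < u j" "\<forall>j\<in>S. 0 \<le> c j" "\<forall>d>0. f d = 0"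
  shows "total_pay f S u c r = 0"
  unfolding total_pay_def P_r_def using assms Q_r_eq_0 by (intro sum.neutral) auto

lemma feasible_rates_nonempty:
  assumes "standard_alloc f" "0 < B" "\<forall>j\<in>S. 0 < u j" "\<forall>j\<in>S. 0 \<le> c j"
  shows "{r. 0 < r \<and> total_pay f S u c r \<le> B} \<noteq> {}"
proof -
  define K where "K = (exp 1 - 1) * (\<Sum>j\<in>S. u j)"
  have "0 \<le> K"
    unfolding K_def using assms by (intro mult_nonneg_nonneg sum_nonneg) auto
  define r where "r = B / (K + 1)"
  have "0 < r" using \<open>0 \<le> K\<close> assms by (simp add: r_def)
  have "total_pay f S u c r \<le> r * K"
    using total_pay_le[OF assms(1) \<open>0 < r\<close> assms(3,4)] by (simp add: K_def mult.assoc)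
  also have "\<dots> \<le> B" using \<open>0 \<le> K\<close> assms by (simp add: r_def field_simps)
  finally show ?thesis using \<open>0 < r\<close> by blast
qed

lemma feasible_rates_bdd_above:
  assumes "standard_alloc f" "finite S" "\<forall>j\<in>S. 0 < u j" "\<forall>j\<in>S. 0 \<le> c j"
    and "i \<in> S" "0 < d" "0 < f d"
  shows "bdd_above {r. 0 < r \<and> total_pay f S u c r \<le> B}"
proof (rule bdd_aboveI)
  fix r assume "r \<in> {r. 0 < r \<and> total_pay f S u c r \<le> B}"
  then have "(u i * r * d - c i) * f d \<le> B"
    using total_pay_ge[OF assms(1) _ assms(2-6)] by force
  then have "r * (u i * d * f d) \<le> B + c i * f d" by (simp add: algebra_simps)
  then show "r \<le> (B + c i * f d) / (u i * d * f d)"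
    using assms by (simp add: field_simps)
qed

theorem lemma1:
  fixes f :: "real \<Rightarrow> real" and B :: real and S :: "'a set"
    and u c :: "'a \<Rightarrow> real" and i :: 'a
  assumes "standard_alloc f"
    and "0 < B"
    and "finite S"
    and "\<forall>j\<in>S. 0 < u j"
    and "\<forall>j\<in>S. 0 \<le> c j"
    and "i \<in> S"
  shows "stopping_rate f B S u c \<ge> stopping_rate f B S u (c(i := 0))"
proof -
  define A where "A c' = {r. 0 < r \<and> total_pay f S u c' r \<le> B}" for c'
  have c0: "\<forall>j\<in>S. 0 \<le> (c(i := 0)) j \<and> (c(i := 0)) j \<le> c j" using assms(5) by simp
  then have "total_pay f S u c r \<le> total_pay f S u (c(i := 0)) r" if "0 < r" for r
    using total_pay_antimono[OF assms(1) that assms(4)] by blast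
  then have sub: "A (c(i := 0)) \<subseteq> A c"
    unfolding A_def by (blast intro: order_trans)
  show ?thesis
  proof (cases "\<exists>d>0. 0 < f d")
    case True
    then obtain d where "0 < d" "0 < f d" by blast
    then have "bdd_above (A c)"
      unfolding A_def by (rule feasible_rates_bdd_above[OF assms(1,3,4,5,6)])
    moreover have "A (c(i := 0)) \<noteq> {}" unfolding A_def
      using feasible_rates_nonempty[OF assms(1,2,4)] c0 by blast
    ultimately show ?thesis
      unfolding stopping_rate_def using cSup_subset_mono sub by (metis A_def)
  next
    case False
    then have "\<forall>d>0. f d = 0"
      using assms(1) unfolding standard_alloc_def by (meson less_imp_le not_less order_antisym)
    then have "A (c(i := 0)) = A c"
      unfolding A_def using total_pay_eq_0[OF assms(1) _ assms(4)] c0 assms(5) by auto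
    then show ?thesis unfolding stopping_rate_def A_def by simp
  qed
qed

end
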